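(* Let $n,m,n_g,n_w,r$, $A\in\mathbb{R}^{n\times n}$, $S\in\mathbb{R}^{n\times n_g}$, $C\in\mathbb{R}^{m\times n}$, $D_\omega\in\mathbb{R}^{n\times n_w}$ be given, $n_z=n+rn_g$, $d_n=(r-1)n_g$, and define $$A_a=\begin{bmatrix} A & S & 0\\ 0 & 0 & I_{d_n}\\ 0&0&0\end{bmatrix},\quad D_a=\begin{bmatrix} D_\omega & 0\\ 0&0\\ 0 & I_{n_g}\end{bmatrix},\quad C_a=\begin{bmatrix} C & 0\end{bmatrix},\quad \bar C_a=\begin{bmatrix} I_n & 0 & 0\\ 0 & I_{n_g} & 0\end{bmatrix}.$$ Suppose there exist $P\in\mathbb{R}^{n_z\times n_z}$, $P\succ 0$, $R,Q\in\mathbb{R}^{n_z\times m}$ and a scalar $\bar\lambda>0$ such that $$\begin{bmatrix} X & -(P+RC_a)D_a & \bar C_a^\top\\ * & -\bar\lambda I & 0\\ * & * & -\bar\lambda I\end{bmatrix}\prec 0,\qquad X:=A_a^\top P+A_a^\top C_a^\top R^\top-C_a^\top Q^\top+PA_a+RC_aA_a-QC_a.$$ Let $E=P^{-1}R$, $K=P^{-1}Q$, $M=I+EC_a$, $N=MA_a-KC_a$, and $T_{e_d\omega_a}(s)=-\bar C_a(sI-N)^{-1}MD_a$ (the transfer matrix from $\omega_a$ to $e_d=\bar C_a e$ of the error dynamics $\dot e=Ne-MD_a\omega_a+[K\ -E]\nu_a$). Then $\|T_{e_d\omega_a}\|_\infty<\bar\lambda$.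
   Context: $*$ denotes the block that makes the matrix symmetric. The $H_\infty$-norm is $\|T\|_\infty=\sup_{\mu\in\mathbb{R}^+}\sigma_{\max}(T(i\mu))$. *)

theory Defs
  imports "Jordan_Normal_Form.Matrix" "Jordan_Normal_Form.Char_Poly"
    "Jordan_Normal_Form.Gauss_Jordan_Elimination" "Jordan_Normal_Form.Schur_Decomposition"
    "HOL-Library.Extended_Real"
begin

definition hcat :: "'a :: zero mat \<Rightarrow> 'a mat \<Rightarrow> 'a mat" where
  "hcat X Y = four_block_mat X Y (0\<^sub>m 0 (dim_col X)) (0\<^sub>m 0 (dim_col Y))"

definition block3 :: "'a :: zero mat \<Rightarrow> 'a mat \<Rightarrow> 'a mat \<Rightarrow> 'a mat \<Rightarrow> 'a mat \<Rightarrow> 'a mat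
    \<Rightarrow> 'a mat \<Rightarrow> 'a mat \<Rightarrow> 'a mat \<Rightarrow> 'a mat" where
  "block3 a b c d e f g h i = hcat a (hcat b c) @\<^sub>r hcat d (hcat e f) @\<^sub>r hcat g (hcat h i)"

(* matrix inverse (junk value 0 for singular matrices) *)
definition minv :: "'a :: field mat \<Rightarrow> 'a mat" where
  "minv M = (case mat_inverse M of Some B \<Rightarrow> B | None \<Rightarrow> 0\<^sub>m (dim_row M) (dim_col M))"

definition pos_def :: "real mat \<Rightarrow> nat \<Rightarrow> bool" where
  "pos_def P k \<longleftrightarrow> P \<in> carrier_mat k k \<and> transpose_mat P = P \<and>
     (\<forall>v \<in> carrier_vec k. v \<noteq> 0\<^sub>v k \<longrightarrow> v \<bullet> (P *\<^sub>v v) > 0)"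

definition neg_def :: "real mat \<Rightarrow> nat \<Rightarrow> bool" where
  "neg_def M k \<longleftrightarrow> M \<in> carrier_mat k k \<and> transpose_mat M = M \<and>
     (\<forall>v \<in> carrier_vec k. v \<noteq> 0\<^sub>v k \<longrightarrow> v \<bullet> (M *\<^sub>v v) < 0)"

(* largest singular value: square root of the largest eigenvalue of T^H T
   (0 if there are no eigenvalues, i.e. T has no columns) *)
definition sigma_max :: "complex mat \<Rightarrow> real" where
  "sigma_max T = sqrt (Max (insert 0 {Re l | l. eigenvalue (mat_adjoint T * T) l}))"

definition hinf_norm :: "(complex \<Rightarrow> complex mat) \<Rightarrow> ereal" where
  "hinf_norm G = (SUP \<mu> \<in> {0<..}. ereal (sigma_max (G (\<i> * complex_of_real \<mu>))))"

definition aug_A :: "nat \<Rightarrow> nat \<Rightarrow> nat \<Rightarrow> real mat \<Rightarrow> real mat \<Rightarrow> real mat" where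
  "aug_A n ng r A S = (let dn = (r - 1) * ng in
     block3 A S (0\<^sub>m n dn)
            (0\<^sub>m dn n) (0\<^sub>m dn ng) (1\<^sub>m dn)
            (0\<^sub>m ng n) (0\<^sub>m ng ng) (0\<^sub>m ng dn))"

definition aug_D :: "nat \<Rightarrow> nat \<Rightarrow> nat \<Rightarrow> nat \<Rightarrow> real mat \<Rightarrow> real mat" where
  "aug_D n ng nw r Dw = (let dn = (r - 1) * ng in
     hcat Dw (0\<^sub>m n ng) @\<^sub>r hcat (0\<^sub>m dn nw) (0\<^sub>m dn ng) @\<^sub>r hcat (0\<^sub>m ng nw) (1\<^sub>m ng))"

definition aug_C :: "nat \<Rightarrow> nat \<Rightarrow> nat \<Rightarrow> nat \<Rightarrow> real mat \<Rightarrow> real mat" where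
  "aug_C n m ng r C = hcat C (0\<^sub>m m (r * ng))"

definition aug_Cbar :: "nat \<Rightarrow> nat \<Rightarrow> nat \<Rightarrow> real mat" where
  "aug_Cbar n ng r = (let dn = (r - 1) * ng in
     hcat (1\<^sub>m n) (hcat (0\<^sub>m n ng) (0\<^sub>m n dn)) @\<^sub>r hcat (0\<^sub>m ng n) (hcat (1\<^sub>m ng) (0\<^sub>m ng dn)))"

end

theory Submission
  imports Defs "HOL-Analysis.Function_Topology"
begin

text \<open>
  With \<open>E = P\<^sup>-\<^sup>1 R\<close> and \<open>K = P\<^sup>-\<^sup>1 Q\<close> we have \<open>P E = R\<close> and \<open>P K = Q\<close>, so the LMI of the
  hypothesis is the strict bounded real inequality
  \<open>[N\<^sup>T P + P N, P B, C\<^sup>T; (P B)\<^sup>T, -\<lambda> I, 0; C, 0, -\<lambda> I] \<prec> 0\<close>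
  of the error system \<open>e' = N e + B \<omega>\<close>, \<open>e\<^sub>d = C e\<close>, where \<open>B = -M D\<^sub>a\<close> and \<open>C\<close> is the
  output matrix \<open>C\<^sub>a\<close>-bar. Being strictly negative definite, its quadratic form is bounded by
  \<open>-\<delta> |z|\<^sup>2\<close> for some \<open>\<delta> > 0\<close>. Fix \<open>s = i\<mu>\<close> and \<open>w\<close>, and let \<open>x = (s I - N)\<^sup>-\<^sup>1 B w\<close>.
  At \<open>(x, w, y)\<close> the storage terms \<open>x\<^sup>* P (N x + B w) + (N x + B w)\<^sup>* P x = 2 Re s \<cdot> x\<^sup>* P x\<close>
  vanish, and \<open>y = C x / \<lambda>\<close> leaves \<open>|C x|\<^sup>2 / \<lambda> - \<lambda> |w|\<^sup>2 \<le> -\<delta> |w|\<^sup>2\<close>. Hence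
  \<open>\<sigma>\<^sub>m\<^sub>a\<^sub>x(T(i\<mu>))\<^sup>2 \<le> \<lambda> (\<lambda> - \<delta>)\<close> for every \<open>\<mu>\<close>, so the \<open>H\<^sub>\<infinity>\<close>-norm stays below \<open>\<lambda>\<close>.
  With \<open>w = 0\<close> the same identity shows that \<open>s I - N\<close> is nonsingular.
\<close>

section \<open>Matrix algebra\<close>

lemma smult_one_mult_mat_vec:
  fixes v :: "'a :: comm_ring_1 vec"
  assumes "v \<in> carrier_vec n"
  shows "(l \<cdot>\<^sub>m 1\<^sub>m n) *\<^sub>v v = l \<cdot>\<^sub>v v"
proof (rule eq_vecI)
  fix i assume "i < dim_vec (l \<cdot>\<^sub>v v)"
  then have i: "i < n" using assms by simp
  have "row (l \<cdot>\<^sub>m 1\<^sub>m n) i \<bullet> v = (\<Sum>j\<in>{0..<n}. if i = j then l * v $ j else 0)"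
    using assms i unfolding scalar_prod_def by (intro sum.cong) auto
  also have "\<dots> = l * v $ i"
    using i by simp
  finally show "((l \<cdot>\<^sub>m 1\<^sub>m n) *\<^sub>v v) $ i = (l \<cdot>\<^sub>v v) $ i"
    using assms i by simp
qed (use assms in simp)

lemma zero_mat_mult_vec: "v \<in> carrier_vec c \<Longrightarrow> (0\<^sub>m r c :: 'a :: semiring_0 mat) *\<^sub>v v = 0\<^sub>v r"
  by (intro eq_vecI) auto

lemma resolvent_mult_vec_eq_iff:
  fixes A :: "'a :: comm_ring_1 mat"
  assumes A: "A \<in> carrier_mat n n" and x: "x \<in> carrier_vec n" and u: "u \<in> carrier_vec n"
  shows "(s \<cdot>\<^sub>m 1\<^sub>m n - A) *\<^sub>v x = u \<longleftrightarrow> s \<cdot>\<^sub>v x = A *\<^sub>v x + u"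
proof -
  have "(s \<cdot>\<^sub>m 1\<^sub>m n - A) *\<^sub>v x = s \<cdot>\<^sub>v x - A *\<^sub>v x"
    using A x by (simp add: minus_mult_distrib_mat_vec[of _ n n] smult_one_mult_mat_vec)
  then show ?thesis
    using A x u by (auto simp: vec_eq_iff algebra_simps)
qed

lemma minv_of_injective:
  fixes A :: "'a :: field mat"
  assumes A: "A \<in> carrier_mat n n"
    and inj: "\<And>v. v \<in> carrier_vec n \<Longrightarrow> A *\<^sub>v v = 0\<^sub>v n \<Longrightarrow> v = 0\<^sub>v n"
  shows "A * minv A = 1\<^sub>m n" and "minv A * A = 1\<^sub>m n" and "minv A \<in> carrier_mat n n"
proof -
  have "det A \<noteq> 0"
    using det_0_iff_vec_prod_zero_field[OF A] inj by blast
  then have "A \<in> Units (ring_mat TYPE('a) n ())"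
    by (rule det_non_zero_imp_unit[OF A])
  then obtain B where B: "mat_inverse A = Some B"
    using mat_inverse(1)[OF A, where b = "()"] by (cases "mat_inverse A") auto
  then show "A * minv A = 1\<^sub>m n" and "minv A * A = 1\<^sub>m n" and "minv A \<in> carrier_mat n n"
    using mat_inverse(2)[OF A B] unfolding minv_def by simp_all
qed

lemma minv_carrier: "A \<in> carrier_mat n n \<Longrightarrow> minv A \<in> carrier_mat n n"
  unfolding minv_def using mat_inverse(2) by (auto split: option.split)

lemma hcat_carrier [simp, intro]:
  "X \<in> carrier_mat r c1 \<Longrightarrow> Y \<in> carrier_mat r c2 \<Longrightarrow> hcat X Y \<in> carrier_mat r (c1 + c2)"
  unfolding hcat_def by auto

lemma hcat_mult_vec:
  fixes X :: "'a :: comm_ring_1 mat"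
  assumes X: "X \<in> carrier_mat r c1" and Y: "Y \<in> carrier_mat r c2"
    and u: "u \<in> carrier_vec c1" and v: "v \<in> carrier_vec c2"
  shows "hcat X Y *\<^sub>v (u @\<^sub>v v) = X *\<^sub>v u + Y *\<^sub>v v"
proof -
  have "hcat X Y *\<^sub>v (u @\<^sub>v v) = (X *\<^sub>v u + Y *\<^sub>v v) @\<^sub>v (0\<^sub>m 0 c1 *\<^sub>v u + 0\<^sub>m 0 c2 *\<^sub>v v)"
    using X Y unfolding hcat_def
    by (simp only: carrier_matD) (rule four_block_mat_mult_vec[OF X Y zero_carrier_mat zero_carrier_mat u v])
  also have "\<dots> = X *\<^sub>v u + Y *\<^sub>v v"
    using X Y u v by (intro eq_vecI) auto
  finally show ?thesis .
qed

lemma append_rows_mult_vec: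
  assumes "A \<in> carrier_mat r1 c" and "B \<in> carrier_mat r2 c" and "v \<in> carrier_vec c"
  shows "(A @\<^sub>r B) *\<^sub>v v = (A *\<^sub>v v) @\<^sub>v (B *\<^sub>v v)"
  using assms by (intro eq_vecI) (auto simp: append_rows_def scalar_prod_def row_def)

lemma map_mat_hcat:
  "X \<in> carrier_mat r c1 \<Longrightarrow> Y \<in> carrier_mat r c2 \<Longrightarrow>
    map_mat f (hcat X Y) = hcat (map_mat f X) (map_mat f Y)"
  unfolding hcat_def by (intro eq_matI) auto

lemma map_mat_append_rows:
  "A \<in> carrier_mat r1 c \<Longrightarrow> B \<in> carrier_mat r2 c \<Longrightarrow>
    map_mat f (A @\<^sub>r B) = map_mat f A @\<^sub>r map_mat f B"
  unfolding append_rows_def by (intro eq_matI) auto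

context
  fixes ra rb rc ca cb cc :: nat and a b c d e f g h i :: "'a :: comm_ring_1 mat"
  assumes blocks: "a \<in> carrier_mat ra ca" "b \<in> carrier_mat ra cb" "c \<in> carrier_mat ra cc"
    "d \<in> carrier_mat rb ca" "e \<in> carrier_mat rb cb" "f \<in> carrier_mat rb cc"
    "g \<in> carrier_mat rc ca" "h \<in> carrier_mat rc cb" "i \<in> carrier_mat rc cc"
begin

lemma block3_carrier: "block3 a b c d e f g h i \<in> carrier_mat (ra + (rb + rc)) (ca + (cb + cc))"
  unfolding block3_def using blocks by (intro carrier_append_rows hcat_carrier) auto

lemma block3_mult_vec:
  assumes x: "x \<in> carrier_vec ca" and w: "w \<in> carrier_vec cb" and y: "y \<in> carrier_vec cc"
  shows "block3 a b c d e f g h i *\<^sub>v (x @\<^sub>v w @\<^sub>v y) =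
     (a *\<^sub>v x + (b *\<^sub>v w + c *\<^sub>v y)) @\<^sub>v (d *\<^sub>v x + (e *\<^sub>v w + f *\<^sub>v y)) @\<^sub>v (g *\<^sub>v x + (h *\<^sub>v w + i *\<^sub>v y))"
proof -
  have xwy: "x @\<^sub>v w @\<^sub>v y \<in> carrier_vec (ca + (cb + cc))"
    using x w y by auto
  have rows: "hcat a (hcat b c) \<in> carrier_mat ra (ca + (cb + cc))"
    "hcat d (hcat e f) \<in> carrier_mat rb (ca + (cb + cc))"
    "hcat g (hcat h i) \<in> carrier_mat rc (ca + (cb + cc))"
    using blocks by auto
  show ?thesis
    unfolding block3_def
    using append_rows_mult_vec[OF rows(1) carrier_append_rows[OF rows(2,3)] xwy]
      append_rows_mult_vec[OF rows(2,3) xwy] blocks x w y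
    by (simp add: hcat_mult_vec[of _ _ ca _ "cb + cc"] hcat_mult_vec[of _ _ cb _ cc])
qed

lemma map_mat_block3:
  "map_mat F (block3 a b c d e f g h i) = block3 (map_mat F a) (map_mat F b) (map_mat F c)
     (map_mat F d) (map_mat F e) (map_mat F f) (map_mat F g) (map_mat F h) (map_mat F i)"
  unfolding block3_def using blocks
  by (simp add: map_mat_append_rows[of _ ra "ca + (cb + cc)" _ "rb + rc"]
      map_mat_append_rows[of _ rb "ca + (cb + cc)" _ rc]
      map_mat_hcat[of _ _ ca _ "cb + cc"] map_mat_hcat[of _ _ cb _ cc] carrier_append_rows)

end

section \<open>Complex vectors and complexified real matrices\<close>

definition sq_norm_vec :: "complex vec \<Rightarrow> real" where
  "sq_norm_vec v = Re (conjugate v \<bullet> v)"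

lemma conjugate_scalar_prod_self_ge_0: "0 \<le> conjugate v \<bullet> (v :: complex vec)"
proof -
  have "conjugate v \<bullet> v = v \<bullet>c v"
    by (rule conjugate_vec_sprod_comm[symmetric]) (rule carrier_vec_dim_vec)+
  then show ?thesis by (simp only: conjugate_square_ge_0_vec)
qed

lemma sq_norm_vec_eq: "conjugate v \<bullet> v = complex_of_real (sq_norm_vec v)"
  using conjugate_scalar_prod_self_ge_0[of v]
  by (simp add: sq_norm_vec_def complex_eq_iff less_eq_complex_def)

lemma sq_norm_vec_nonneg: "sq_norm_vec v \<ge> 0"
  using conjugate_scalar_prod_self_ge_0[of v] by (simp add: sq_norm_vec_def less_eq_complex_def)

lemma sq_norm_vec_pos:
  assumes "v \<in> carrier_vec n" and "v \<noteq> 0\<^sub>v n"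
  shows "sq_norm_vec v > 0"
proof -
  have "0 < v \<bullet>c v" using conjugate_square_greater_0_vec[OF assms(1)] assms(2) by blast
  also have "v \<bullet>c v = conjugate v \<bullet> v"
    by (rule conjugate_vec_sprod_comm[OF assms(1) assms(1)])
  finally show ?thesis unfolding sq_norm_vec_def less_complex_def zero_complex.sel by (rule conjunct1)
qed

lemma conjugate_append_vec: "conjugate (u @\<^sub>v v) = conjugate u @\<^sub>v conjugate (v :: complex vec)"
  by (intro eq_vecI) auto

lemma sq_norm_vec_append: "sq_norm_vec (u @\<^sub>v v) = sq_norm_vec u + sq_norm_vec v"
  unfolding sq_norm_vec_def conjugate_append_vec
  by (subst scalar_prod_append[of _ "dim_vec u" _ "dim_vec v"]) auto

lemma conjugate_append3_scalar_prod:
  fixes x w y :: "complex vec"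
  assumes "x \<in> carrier_vec n1" "w \<in> carrier_vec n2" "y \<in> carrier_vec n3"
    and "u1 \<in> carrier_vec n1" "u2 \<in> carrier_vec n2" "u3 \<in> carrier_vec n3"
  shows "conjugate (x @\<^sub>v w @\<^sub>v y) \<bullet> (u1 @\<^sub>v u2 @\<^sub>v u3)
    = conjugate x \<bullet> u1 + conjugate w \<bullet> u2 + conjugate y \<bullet> u3"
  using assms unfolding conjugate_append_vec
  by (simp add: scalar_prod_append[of _ n1 _ "n2 + n3"] scalar_prod_append[of _ n2 _ n3] add.assoc)

abbreviation cmat :: "real mat \<Rightarrow> complex mat" where
  "cmat \<equiv> map_mat complex_of_real"

lemma cmat_add: "A \<in> carrier_mat r c \<Longrightarrow> B \<in> carrier_mat r c \<Longrightarrow> cmat (A + B) = cmat A + cmat B"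
  by (intro eq_matI) auto

lemma cmat_uminus: "cmat (- A) = - cmat A"
  by (intro eq_matI) auto

lemma cmat_smult: "cmat (a \<cdot>\<^sub>m A) = complex_of_real a \<cdot>\<^sub>m cmat A"
  by (intro eq_matI) auto

lemma cmat_one: "cmat (1\<^sub>m n) = 1\<^sub>m n"
  by (intro eq_matI) auto

lemma cmat_zero: "cmat (0\<^sub>m r c) = 0\<^sub>m r c"
  by (intro eq_matI) auto

lemma conjugate_scalar_prod_transpose_cmat:
  assumes A: "A \<in> carrier_mat r c" and u: "u \<in> carrier_vec c" and v: "v \<in> carrier_vec r"
  shows "conjugate u \<bullet> (transpose_mat (cmat A) *\<^sub>v v) = conjugate (cmat A *\<^sub>v u) \<bullet> v"
proof -
  have conj: "cmat A *\<^sub>v conjugate u = conjugate (cmat A *\<^sub>v u)"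
    using A u by (intro eq_vecI) (auto simp: scalar_prod_def cnj_sum)
  have cA: "cmat A \<in> carrier_mat r c"
    using A by simp
  have "conjugate u \<bullet> (transpose_mat (cmat A) *\<^sub>v v) = (transpose_mat (cmat A) *\<^sub>v v) \<bullet> conjugate u"
    using A u v by (intro comm_scalar_prod[of _ c]) auto
  also have "\<dots> = v \<bullet> conjugate (cmat A *\<^sub>v u)"
    using transpose_vec_mult_scalar[OF cA _ v] u by (simp add: conj)
  also have "\<dots> = conjugate (cmat A *\<^sub>v u) \<bullet> v"
    using A u v by (intro comm_scalar_prod[of _ r]) auto
  finally show ?thesis .
qed

lemma Re_conjugate_scalar_prod_commute:
  fixes u v :: "complex vec"
  assumes "u \<in> carrier_vec n" "v \<in> carrier_vec n"
  shows "Re (conjugate u \<bullet> v) = Re (conjugate v \<bullet> u)"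
  using assms unfolding scalar_prod_def by (auto simp: Re_sum mult.commute intro!: sum.cong)

section \<open>Negative definite matrices are uniformly negative\<close>

text \<open>The unit sphere of \<open>\<real>\<^sup>k\<close>, with vectors encoded as functions on \<open>nat\<close> that vanish
  from \<open>k\<close> on, so that its compactness comes from the product topology.\<close>

definition unit_sphere_upto :: "nat \<Rightarrow> (nat \<Rightarrow> real) set" where
  "unit_sphere_upto k = {a. (\<Sum>i<k. (a i)\<^sup>2) = 1 \<and> (\<forall>i\<ge>k. a i = 0)}"

lemma compact_unit_sphere_upto: "compact (unit_sphere_upto k)"
proof -
  define B where "B = (\<lambda>i::nat. if i < k then {-1..1::real} else {0})"
  have "compactin (product_topology (\<lambda>i. euclidean) UNIV) (PiE UNIV B)"
    unfolding compactin_PiE B_def by auto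
  then have "compact (PiE UNIV B)"
    by (simp add: euclidean_product_topology compactin_euclidean_iff)
  moreover have "closed {a :: nat \<Rightarrow> real. (\<Sum>i<k. (a i)\<^sup>2) = 1}"
    by (intro closed_Collect_eq continuous_intros continuous_on_product_coordinates)
  moreover have "unit_sphere_upto k = PiE UNIV B \<inter> {a. (\<Sum>i<k. (a i)\<^sup>2) = 1}"
  proof (intro equalityI subsetI)
    fix a assume a: "a \<in> unit_sphere_upto k"
    have "\<bar>a i\<bar> \<le> 1" if "i < k" for i
      using a member_le_sum[of i "{..<k}" "\<lambda>i. (a i)\<^sup>2"] that
      by (simp add: unit_sphere_upto_def abs_square_le_1)
    then have "a i \<in> B i" for i
      using a by (cases "i < k") (auto simp: B_def abs_le_iff unit_sphere_upto_def)
    then show "a \<in> PiE UNIV B \<inter> {a. (\<Sum>i<k. (a i)\<^sup>2) = 1}"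
      using a by (simp add: PiE_iff unit_sphere_upto_def)
  next
    fix a assume a: "a \<in> PiE UNIV B \<inter> {a. (\<Sum>i<k. (a i)\<^sup>2) = 1}"
    have "a i = 0" if "i \<ge> k" for i
      using a that by (auto simp: PiE_iff B_def dest!: spec[of _ i])
    then show "a \<in> unit_sphere_upto k"
      using a by (simp add: unit_sphere_upto_def)
  qed
  ultimately show ?thesis by (simp add: compact_Int_closed)
qed

lemma quadratic_form_le_by_unit_sphere:
  fixes L :: "nat \<Rightarrow> nat \<Rightarrow> real"
  assumes sphere: "\<And>b. b \<in> unit_sphere_upto k \<Longrightarrow> (\<Sum>i<k. \<Sum>j<k. b i * L i j * b j) \<le> c"
  shows "(\<Sum>i<k. \<Sum>j<k. a i * L i j * a j) \<le> c * (\<Sum>i<k. (a i)\<^sup>2)"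
proof (cases "\<exists>i<k. a i \<noteq> 0")
  case False
  then show ?thesis by simp
next
  case True
  define r where "r = sqrt (\<Sum>i<k. (a i)\<^sup>2)"
  have sum_pos: "(\<Sum>i<k. (a i)\<^sup>2) > 0"
    using True by (force intro: sum_pos2)
  then have r_pos: "r > 0" and r_sq: "r\<^sup>2 = (\<Sum>i<k. (a i)\<^sup>2)"
    by (simp_all add: r_def)
  define b where "b i = (if i < k then a i / r else 0)" for i
  have "(\<Sum>i<k. (b i)\<^sup>2) = (\<Sum>i<k. (a i)\<^sup>2) / r\<^sup>2"
    by (simp add: b_def power_divide sum_divide_distrib)
  also have "\<dots> = 1"
    using sum_pos r_sq by simp
  finally have "b \<in> unit_sphere_upto k"
    by (simp add: unit_sphere_upto_def b_def)
  moreover have "(\<Sum>i<k. \<Sum>j<k. a i * L i j * a j) = r\<^sup>2 * (\<Sum>i<k. \<Sum>j<k. b i * L i j * b j)"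
    using r_pos by (simp add: b_def sum_distrib_left power2_eq_square)
  ultimately show ?thesis
    using sphere sum_pos r_sq by (simp add: mult.commute mult_right_mono)
qed

lemma quadratic_form_uniformly_negative:
  fixes L :: "nat \<Rightarrow> nat \<Rightarrow> real"
  assumes neg: "\<And>a. \<exists>i<k. a i \<noteq> 0 \<Longrightarrow> (\<Sum>i<k. \<Sum>j<k. a i * L i j * a j) < 0"
  shows "\<exists>\<delta>>0. \<forall>a. (\<Sum>i<k. \<Sum>j<k. a i * L i j * a j) \<le> - \<delta> * (\<Sum>i<k. (a i)\<^sup>2)"
proof (cases "k = 0")
  case True
  then show ?thesis by (intro exI[of _ 1]) simp
next
  case False
  define q where "q a = (\<Sum>i<k. \<Sum>j<k. a i * L i j * a j)" for a :: "nat \<Rightarrow> real"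
  have "(\<Sum>i<k. (if i = 0 then 1 else 0 :: real)\<^sup>2) = (\<Sum>i<k. if i = 0 then 1 else 0)"
    by (intro sum.cong) auto
  also have "\<dots> = 1"
    using False by simp
  finally have "(\<lambda>i. if i = 0 then 1 else 0) \<in> unit_sphere_upto k"
    using False by (simp add: unit_sphere_upto_def)
  moreover have "continuous_on UNIV q"
    unfolding q_def by (intro continuous_intros continuous_on_product_coordinates)
  then have "continuous_on (unit_sphere_upto k) q"
    by (rule continuous_on_subset) simp
  ultimately obtain a0 where a0: "a0 \<in> unit_sphere_upto k"
    and a0_max: "\<And>b. b \<in> unit_sphere_upto k \<Longrightarrow> q b \<le> q a0"
    using continuous_attains_sup[OF compact_unit_sphere_upto] by blast
  have "\<exists>i<k. a0 i \<noteq> 0"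
  proof (rule ccontr)
    assume "\<not> (\<exists>i<k. a0 i \<noteq> 0)"
    then have "(\<Sum>i<k. (a0 i)\<^sup>2) = 0" by simp
    with a0 show False by (simp add: unit_sphere_upto_def)
  qed
  then have "q a0 < 0"
    unfolding q_def by (rule neg)
  moreover have "q a \<le> q a0 * (\<Sum>i<k. (a i)\<^sup>2)" for a
    using a0_max unfolding q_def by (rule quadratic_form_le_by_unit_sphere)
  ultimately show ?thesis
    by (intro exI[of _ "- q a0"]) (simp add: q_def)
qed

lemma neg_def_uniformly_negative_complex:
  assumes "neg_def L k"
  shows "\<exists>\<delta>>0. \<forall>z \<in> carrier_vec k. Re (conjugate z \<bullet> (cmat L *\<^sub>v z)) \<le> - \<delta> * sq_norm_vec z"
proof -
  have L: "L \<in> carrier_mat k k"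
    and neg: "\<And>v. v \<in> carrier_vec k \<Longrightarrow> v \<noteq> 0\<^sub>v k \<Longrightarrow> v \<bullet> (L *\<^sub>v v) < 0"
    using assms unfolding neg_def_def by auto
  define q where "q a = (\<Sum>i<k. \<Sum>j<k. a i * L $$ (i, j) * a j)" for a
  have "q a < 0" if "\<exists>i<k. a i \<noteq> 0" for a
  proof -
    have "vec k a \<noteq> 0\<^sub>v k"
      using that by (metis index_vec index_zero_vec(1))
    then have "vec k a \<bullet> (L *\<^sub>v vec k a) < 0"
      by (intro neg) auto
    also have "vec k a \<bullet> (L *\<^sub>v vec k a) = q a"
      using L unfolding q_def scalar_prod_def mult_mat_vec_def
      by (auto simp: lessThan_atLeast0 sum_distrib_left row_def mult.assoc intro!: sum.cong)
    finally show ?thesis .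
  qed
  then obtain \<delta> where "\<delta> > 0" and \<delta>: "\<And>a. q a \<le> - \<delta> * (\<Sum>i<k. (a i)\<^sup>2)"
    using quadratic_form_uniformly_negative[of k "\<lambda>i j. L $$ (i, j)"] unfolding q_def by blast
  have "Re (conjugate z \<bullet> (cmat L *\<^sub>v z)) \<le> - \<delta> * sq_norm_vec z" if z: "z \<in> carrier_vec k" for z
  proof -
    define a b where "a i = Re (z $ i)" and "b i = Im (z $ i)" for i
    have "Re (conjugate z \<bullet> (cmat L *\<^sub>v z))
        = (\<Sum>i<k. \<Sum>j<k. L $$ (i, j) * (a i * a j + b i * b j))"
      using z L unfolding scalar_prod_def mult_mat_vec_def a_def b_def
      by (auto simp: lessThan_atLeast0 sum_distrib_left row_def algebra_simps intro!: sum.cong)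
    also have "\<dots> = q a + q b"
      unfolding q_def by (simp add: algebra_simps sum.distrib)
    also have "\<dots> \<le> - \<delta> * ((\<Sum>i<k. (a i)\<^sup>2) + (\<Sum>i<k. (b i)\<^sup>2))"
      using \<delta>[of a] \<delta>[of b] by (simp add: algebra_simps)
    also have "(\<Sum>i<k. (a i)\<^sup>2) + (\<Sum>i<k. (b i)\<^sup>2) = (\<Sum>i<k. (a i)\<^sup>2 + (b i)\<^sup>2)"
      by (simp add: sum.distrib)
    also have "\<dots> = sq_norm_vec z"
      using z unfolding sq_norm_vec_def scalar_prod_def a_def b_def
      by (auto simp: lessThan_atLeast0 Re_sum power2_eq_square intro!: sum.cong)
    finally show ?thesis .
  qed
  with \<open>\<delta> > 0\<close> show ?thesis by blast
qed

section \<open>Singular values and the H-infinity norm\<close>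

lemma conjugate_scalar_prod_mat_adjoint:
  fixes G :: "complex mat"
  assumes G: "G \<in> carrier_mat p q" and v: "v \<in> carrier_vec q" and u: "u \<in> carrier_vec p"
  shows "conjugate v \<bullet> (mat_adjoint G *\<^sub>v u) = conjugate (G *\<^sub>v v) \<bullet> u"
proof -
  have "conjugate v \<bullet> (mat_adjoint G *\<^sub>v u) = (\<Sum>i<q. cnj (v $ i) * (\<Sum>j<p. cnj (G $$ (j, i)) * u $ j))"
    using G v u unfolding scalar_prod_def mult_mat_vec_def mat_adjoint_def
    by (auto simp: lessThan_atLeast0 row_def col_def mat_of_rows_def intro!: sum.cong)
  also have "\<dots> = (\<Sum>j<p. cnj (\<Sum>i<q. G $$ (j, i) * v $ i) * u $ j)"
    by (simp add: sum_distrib_left sum_distrib_right cnj_sum mult_ac sum.swap[of _ "{..<q}"])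
  also have "\<dots> = conjugate (G *\<^sub>v v) \<bullet> u"
    using G v u unfolding scalar_prod_def mult_mat_vec_def
    by (auto simp: lessThan_atLeast0 row_def intro!: sum.cong)
  finally show ?thesis .
qed

lemma finite_eigenvalues:
  fixes A :: "'a :: field mat"
  assumes A: "A \<in> carrier_mat n n"
  shows "finite {l. eigenvalue A l}"
proof -
  have "char_poly A \<noteq> 0"
    using degree_monic_char_poly[OF A] by auto
  then have "finite {l. poly (char_poly A) l = 0}"
    by (rule poly_roots_finite)
  then show ?thesis
    using eigenvalue_root_char_poly[OF A] by simp
qed

lemma sigma_max_le:
  fixes G :: "complex mat"
  assumes G: "G \<in> carrier_mat p q" and "\<gamma> \<ge> 0"
    and gain: "\<And>w. w \<in> carrier_vec q \<Longrightarrow> sq_norm_vec (G *\<^sub>v w) \<le> \<gamma>\<^sup>2 * sq_norm_vec w"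
  shows "sigma_max G \<le> \<gamma>"
proof -
  define H where "H = mat_adjoint G * G"
  have adj: "mat_adjoint G \<in> carrier_mat q p"
    using G unfolding mat_adjoint_def by auto
  then have H: "H \<in> carrier_mat q q"
    unfolding H_def using G by auto
  have "Re l \<le> \<gamma>\<^sup>2" if ev: "eigenvalue H l" for l
  proof -
    obtain v where v: "v \<in> carrier_vec q" "v \<noteq> 0\<^sub>v q" and Hv: "H *\<^sub>v v = l \<cdot>\<^sub>v v"
      using ev H unfolding eigenvalue_def eigenvector_def by (auto simp: carrier_matD)
    have "complex_of_real (sq_norm_vec (G *\<^sub>v v)) = conjugate v \<bullet> (H *\<^sub>v v)"
      unfolding H_def sq_norm_vec_eq[symmetric]
      using conjugate_scalar_prod_mat_adjoint[OF G v(1), of "G *\<^sub>v v"] G adj v(1)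
      by (simp add: assoc_mult_mat_vec[of _ q p G p])
    also have "\<dots> = l * complex_of_real (sq_norm_vec v)"
      unfolding Hv sq_norm_vec_eq[symmetric] using v(1) by simp
    finally have "Re (complex_of_real (sq_norm_vec (G *\<^sub>v v))) = Re (l * complex_of_real (sq_norm_vec v))"
      by (rule arg_cong)
    then have "Re l * sq_norm_vec v = sq_norm_vec (G *\<^sub>v v)"
      by simp
    also have "\<dots> \<le> \<gamma>\<^sup>2 * sq_norm_vec v"
      by (rule gain[OF v(1)])
    finally show ?thesis
      using sq_norm_vec_pos[OF v] by simp
  qed
  then have "Max (insert 0 {Re l | l. eigenvalue H l}) \<le> \<gamma>\<^sup>2"
    using finite_eigenvalues[OF H] by (intro Max.boundedI) (auto simp: Setcompr_eq_image)
  then have "sigma_max G \<le> sqrt (\<gamma>\<^sup>2)"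
    unfolding sigma_max_def H_def[symmetric] by (rule real_sqrt_le_mono)
  with \<open>\<gamma> \<ge> 0\<close> show ?thesis by simp
qed

lemma hinf_norm_less:
  assumes "\<And>\<mu>. \<mu> > 0 \<Longrightarrow> sigma_max (T (\<i> * complex_of_real \<mu>)) \<le> b" and "b < \<gamma>"
  shows "hinf_norm T < ereal \<gamma>"
proof -
  have "hinf_norm T \<le> ereal b"
    unfolding hinf_norm_def using assms(1) by (intro SUP_least) simp
  also have "\<dots> < ereal \<gamma>"
    using assms(2) by simp
  finally show ?thesis .
qed

section \<open>The strict bounded real lemma\<close>

definition bounded_real_lmi :: "real mat \<Rightarrow> real mat \<Rightarrow> real mat \<Rightarrow> real mat \<Rightarrow> real \<Rightarrow> real mat" where
  "bounded_real_lmi P N B C \<gamma> =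
     block3 (transpose_mat N * P + P * N) (P * B) (transpose_mat C)
            (transpose_mat (P * B)) (- (\<gamma> \<cdot>\<^sub>m 1\<^sub>m (dim_col B))) (0\<^sub>m (dim_col B) (dim_row C))
            C (0\<^sub>m (dim_row C) (dim_col B)) (- (\<gamma> \<cdot>\<^sub>m 1\<^sub>m (dim_row C)))"

context
  fixes P N B C :: "real mat" and nz p q :: nat
  assumes P: "P \<in> carrier_mat nz nz" and P_sym: "transpose_mat P = P"
    and N: "N \<in> carrier_mat nz nz" and B: "B \<in> carrier_mat nz p" and C: "C \<in> carrier_mat q nz"
begin

lemma cmat_bounded_real_lmi:
  "cmat (bounded_real_lmi P N B C \<gamma>) =
     block3 (transpose_mat (cmat N) * cmat P + cmat P * cmat N) (cmat P * cmat B) (transpose_mat (cmat C))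
            (transpose_mat (cmat B) * cmat P) (- (complex_of_real \<gamma> \<cdot>\<^sub>m 1\<^sub>m p)) (0\<^sub>m p q)
            (cmat C) (0\<^sub>m q p) (- (complex_of_real \<gamma> \<cdot>\<^sub>m 1\<^sub>m q))"
proof -
  have "transpose_mat (P * B) = transpose_mat B * P"
    using P B P_sym by (metis transpose_mult)
  then show ?thesis
    unfolding bounded_real_lmi_def using P N B C
    by (subst map_mat_block3[where ra = nz and ca = nz and cb = p and cc = q and rb = p and rc = q])
      (auto simp: cmat_add[of _ nz nz] of_real_hom.mat_hom_mult[of _ nz nz] of_real_hom.mat_hom_mult[of _ _ nz]
        of_real_hom.mat_hom_mult[of _ p nz] map_mat_transpose cmat_uminus cmat_smult cmat_one cmat_zero)
qed

lemma cmat_bounded_real_lmi_mult_vec: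
  fixes x w y :: "complex vec"
  assumes x: "x \<in> carrier_vec nz" and w: "w \<in> carrier_vec p" and y: "y \<in> carrier_vec q"
  shows "cmat (bounded_real_lmi P N B C \<gamma>) *\<^sub>v (x @\<^sub>v w @\<^sub>v y)
    = (transpose_mat (cmat N) *\<^sub>v (cmat P *\<^sub>v x) + cmat P *\<^sub>v (cmat N *\<^sub>v x + cmat B *\<^sub>v w)
        + transpose_mat (cmat C) *\<^sub>v y)
      @\<^sub>v (transpose_mat (cmat B) *\<^sub>v (cmat P *\<^sub>v x) + - (complex_of_real \<gamma> \<cdot>\<^sub>v w))
      @\<^sub>v (cmat C *\<^sub>v x + - (complex_of_real \<gamma> \<cdot>\<^sub>v y))"
proof -
  let ?P = "cmat P" and ?N = "cmat N" and ?B = "cmat B" and ?C = "cmat C" and ?g = "complex_of_real \<gamma>"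
  have mats: "?P \<in> carrier_mat nz nz" "?N \<in> carrier_mat nz nz" "?B \<in> carrier_mat nz p"
    "?C \<in> carrier_mat q nz"
    using P N B C by auto
  have row1: "(transpose_mat ?N * ?P + ?P * ?N) *\<^sub>v x + (?P * ?B *\<^sub>v w + transpose_mat ?C *\<^sub>v y)
      = transpose_mat ?N *\<^sub>v (?P *\<^sub>v x) + ?P *\<^sub>v (?N *\<^sub>v x + ?B *\<^sub>v w) + transpose_mat ?C *\<^sub>v y"
    using mats x w y
    by (simp add: add_mult_distrib_mat_vec[of _ nz nz] mult_add_distrib_mat_vec[of _ nz nz]
        assoc_mult_mat_vec[of _ nz nz] assoc_mult_mat_vec[of _ nz p] assoc_add_vec[of _ nz])
  have row2: "transpose_mat ?B * ?P *\<^sub>v x + (- (?g \<cdot>\<^sub>m 1\<^sub>m p) *\<^sub>v w + 0\<^sub>m p q *\<^sub>v y)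
      = transpose_mat ?B *\<^sub>v (?P *\<^sub>v x) + - (?g \<cdot>\<^sub>v w)"
    using mats x w y by (simp add: smult_one_mult_mat_vec zero_mat_mult_vec assoc_mult_mat_vec[of _ p nz])
  have row3: "?C *\<^sub>v x + (0\<^sub>m q p *\<^sub>v w + - (?g \<cdot>\<^sub>m 1\<^sub>m q) *\<^sub>v y) = ?C *\<^sub>v x + - (?g \<cdot>\<^sub>v y)"
    using mats x w y by (simp add: smult_one_mult_mat_vec zero_mat_mult_vec)
  show ?thesis
    unfolding cmat_bounded_real_lmi row1[symmetric] row2[symmetric] row3[symmetric]
    using mats x w y
    by (intro block3_mult_vec[where ra = nz and rb = p and rc = q and ca = nz and cb = p and cc = q]) auto
qed

lemma bounded_real_lmi_form_imaginary_axis: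
  fixes x w y :: "complex vec" and s :: complex
  assumes x: "x \<in> carrier_vec nz" and w: "w \<in> carrier_vec p" and y: "y \<in> carrier_vec q"
    and s: "cnj s = - s" and state: "s \<cdot>\<^sub>v x = cmat N *\<^sub>v x + cmat B *\<^sub>v w"
  shows "Re (conjugate (x @\<^sub>v w @\<^sub>v y) \<bullet> (cmat (bounded_real_lmi P N B C \<gamma>) *\<^sub>v (x @\<^sub>v w @\<^sub>v y)))
    = 2 * Re (conjugate (cmat C *\<^sub>v x) \<bullet> y) - \<gamma> * (sq_norm_vec w + sq_norm_vec y)"
proof -
  let ?P = "cmat P" and ?N = "cmat N" and ?B = "cmat B" and ?C = "cmat C" and ?g = "complex_of_real \<gamma>"
  have mats: "?P \<in> carrier_mat nz nz" "?N \<in> carrier_mat nz nz" "?B \<in> carrier_mat nz p"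
    "?C \<in> carrier_mat q nz"
    using P N B C by auto
  have vecs: "?N *\<^sub>v x \<in> carrier_vec nz" "?B *\<^sub>v w \<in> carrier_vec nz" "?P *\<^sub>v x \<in> carrier_vec nz"
    "?C *\<^sub>v x \<in> carrier_vec q" "transpose_mat ?C *\<^sub>v y \<in> carrier_vec nz"
    using mats x w y by auto
  define u where "u = s \<cdot>\<^sub>v x"
  have u: "u \<in> carrier_vec nz"
    using x by (simp add: u_def)
  have u_eq: "?N *\<^sub>v x + ?B *\<^sub>v w = u"
    unfolding u_def by (rule state[symmetric])
  have "conjugate u \<bullet> (?P *\<^sub>v x) + conjugate x \<bullet> (?P *\<^sub>v u) = (cnj s + s) * (conjugate x \<bullet> (?P *\<^sub>v x))"
    using mats x unfolding u_def by (simp add: conjugate_smult_vec mult_mat_vec[of _ nz nz] algebra_simps)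
  then have storage: "conjugate u \<bullet> (?P *\<^sub>v x) + conjugate x \<bullet> (?P *\<^sub>v u) = 0"
    using s by simp
  have "conjugate (x @\<^sub>v w @\<^sub>v y) \<bullet> (cmat (bounded_real_lmi P N B C \<gamma>) *\<^sub>v (x @\<^sub>v w @\<^sub>v y))
      = conjugate x \<bullet> (transpose_mat ?N *\<^sub>v (?P *\<^sub>v x) + ?P *\<^sub>v u + transpose_mat ?C *\<^sub>v y)
        + conjugate w \<bullet> (transpose_mat ?B *\<^sub>v (?P *\<^sub>v x) + - (?g \<cdot>\<^sub>v w))
        + conjugate y \<bullet> (?C *\<^sub>v x + - (?g \<cdot>\<^sub>v y))"
    unfolding cmat_bounded_real_lmi_mult_vec[OF x w y] u_eq
    using mats x w y u by (simp add: conjugate_append3_scalar_prod[of x nz w p y q])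
  also have "\<dots> = (conjugate u \<bullet> (?P *\<^sub>v x) + conjugate x \<bullet> (?P *\<^sub>v u))
        + conjugate (?C *\<^sub>v x) \<bullet> y + conjugate y \<bullet> (?C *\<^sub>v x)
        - ?g * (conjugate w \<bullet> w + conjugate y \<bullet> y)"
    using mats vecs x w y u unfolding u_eq[symmetric]
    by (simp add: scalar_prod_add_distrib[of _ nz] scalar_prod_add_distrib[of _ p]
        scalar_prod_add_distrib[of _ q] add_scalar_prod_distrib[of _ nz] conjugate_add_vec[of _ nz]
        conjugate_scalar_prod_transpose_cmat[OF N] conjugate_scalar_prod_transpose_cmat[OF B]
        conjugate_scalar_prod_transpose_cmat[OF C] algebra_simps)
  finally show ?thesis
    unfolding storage sq_norm_vec_eq
    using Re_conjugate_scalar_prod_commute[of y q "?C *\<^sub>v x"] vecs y by simp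
qed

context
  fixes \<gamma> \<delta> :: real
  assumes margin: "\<And>z. z \<in> carrier_vec (nz + p + q) \<Longrightarrow>
      Re (conjugate z \<bullet> (cmat (bounded_real_lmi P N B C \<gamma>) *\<^sub>v z)) \<le> - \<delta> * sq_norm_vec z"
    and \<delta>: "\<delta> > 0"
begin

lemma imaginary_axis_margin:
  fixes x w :: "complex vec" and s :: complex
  assumes x: "x \<in> carrier_vec nz" and w: "w \<in> carrier_vec p" and y: "y \<in> carrier_vec q"
    and s: "cnj s = - s" and state: "s \<cdot>\<^sub>v x = cmat N *\<^sub>v x + cmat B *\<^sub>v w"
  shows "2 * Re (conjugate (cmat C *\<^sub>v x) \<bullet> y) - \<gamma> * (sq_norm_vec w + sq_norm_vec y)
    \<le> - \<delta> * (sq_norm_vec x + sq_norm_vec w + sq_norm_vec y)"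
proof -
  have "x @\<^sub>v w @\<^sub>v y \<in> carrier_vec (nz + p + q)"
    using x w y by (simp add: add.assoc)
  from margin[OF this] show ?thesis
    unfolding bounded_real_lmi_form_imaginary_axis[OF x w y s state] sq_norm_vec_append by (simp add: add.assoc)
qed

lemma imaginary_axis_resolvent_injective:
  assumes s: "cnj s = - s" and x: "x \<in> carrier_vec nz"
    and Zx: "(s \<cdot>\<^sub>m 1\<^sub>m nz - cmat N) *\<^sub>v x = 0\<^sub>v nz"
  shows "x = 0\<^sub>v nz"
proof (rule ccontr)
  assume "x \<noteq> 0\<^sub>v nz"
  then have "sq_norm_vec x > 0"
    by (rule sq_norm_vec_pos[OF x])
  have "0\<^sub>v nz = cmat B *\<^sub>v 0\<^sub>v p"
    using B by (intro eq_vecI) auto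
  with Zx have "s \<cdot>\<^sub>v x = cmat N *\<^sub>v x + cmat B *\<^sub>v 0\<^sub>v p"
    using N B x by (subst (asm) resolvent_mult_vec_eq_iff) auto
  from imaginary_axis_margin[OF x _ _ s this, of "0\<^sub>v q"]
  have "0 \<le> - \<delta> * sq_norm_vec x"
    using C x by (simp add: sq_norm_vec_def scalar_prod_right_zero[of _ q])
  with \<delta> \<open>sq_norm_vec x > 0\<close> show False
    by (simp add: mult_le_0_iff)
qed

lemma imaginary_axis_output_bound:
  fixes x w :: "complex vec" and s :: complex
  assumes \<gamma>: "\<gamma> > 0" and x: "x \<in> carrier_vec nz" and w: "w \<in> carrier_vec p"
    and s: "cnj s = - s" and state: "s \<cdot>\<^sub>v x = cmat N *\<^sub>v x + cmat B *\<^sub>v w"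
  shows "sq_norm_vec (cmat C *\<^sub>v x) \<le> \<gamma> * (\<gamma> - \<delta>) * sq_norm_vec w"
proof -
  define e where "e = cmat C *\<^sub>v x"
  \<comment> \<open>the maximiser of \<open>2 Re \<langle>e, y\<rangle> - \<gamma> |y|\<^sup>2\<close>\<close>
  define y where "y = complex_of_real (1 / \<gamma>) \<cdot>\<^sub>v e"
  have e: "e \<in> carrier_vec q" and y: "y \<in> carrier_vec q"
    using C x by (simp_all add: e_def y_def)
  have cross: "Re (conjugate e \<bullet> y) = sq_norm_vec e / \<gamma>"
    using e unfolding y_def sq_norm_vec_def by simp
  have y_norm: "sq_norm_vec y = sq_norm_vec e / \<gamma>\<^sup>2"
    using e unfolding y_def sq_norm_vec_def by (simp add: conjugate_smult_vec power2_eq_square)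
  have "2 * (sq_norm_vec e / \<gamma>) - \<gamma> * (sq_norm_vec w + sq_norm_vec e / \<gamma>\<^sup>2)
      \<le> - \<delta> * (sq_norm_vec x + sq_norm_vec w + sq_norm_vec y)"
    using imaginary_axis_margin[OF x w y s state] unfolding e_def[symmetric] cross y_norm .
  also have "\<dots> \<le> - \<delta> * sq_norm_vec w"
    using \<delta> sq_norm_vec_nonneg[of x] sq_norm_vec_nonneg[of y] by (simp add: algebra_simps)
  finally have "sq_norm_vec e / \<gamma> \<le> (\<gamma> - \<delta>) * sq_norm_vec w"
    using \<gamma> by (simp add: power2_eq_square algebra_simps)
  then show ?thesis
    using \<gamma> by (simp add: e_def divide_le_eq mult_ac)
qed

lemma imaginary_axis_gain:
  assumes \<gamma>: "\<gamma> > 0" "\<delta> \<le> \<gamma>" and s: "cnj s = - s"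
  shows "sigma_max (cmat C * minv (s \<cdot>\<^sub>m 1\<^sub>m nz - cmat N) * cmat B) \<le> sqrt (\<gamma> * (\<gamma> - \<delta>))"
proof -
  define Z where "Z = s \<cdot>\<^sub>m 1\<^sub>m nz - cmat N"
  have Z: "Z \<in> carrier_mat nz nz"
    unfolding Z_def using N by (intro minus_carrier_mat) simp
  have inj: "\<And>x. x \<in> carrier_vec nz \<Longrightarrow> Z *\<^sub>v x = 0\<^sub>v nz \<Longrightarrow> x = 0\<^sub>v nz"
    unfolding Z_def by (rule imaginary_axis_resolvent_injective[OF s])
  note Z_inv = minv_of_injective[OF Z inj]
  have G: "cmat C * minv Z * cmat B \<in> carrier_mat q p"
    using C B Z_inv(3) by simp
  show ?thesis
    unfolding Z_def[symmetric]
  proof (rule sigma_max_le[OF G])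
    show "sqrt (\<gamma> * (\<gamma> - \<delta>)) \<ge> 0"
      using \<gamma> by simp
    fix w :: "complex vec" assume w: "w \<in> carrier_vec p"
    define x where "x = minv Z *\<^sub>v (cmat B *\<^sub>v w)"
    have x: "x \<in> carrier_vec nz"
      using Z_inv(3) B w by (simp add: x_def)
    have "Z *\<^sub>v x = cmat B *\<^sub>v w"
      using Z Z_inv B w by (simp add: x_def assoc_mult_mat_vec[symmetric, of Z nz nz "minv Z" nz])
    then have state: "s \<cdot>\<^sub>v x = cmat N *\<^sub>v x + cmat B *\<^sub>v w"
      using N B x w unfolding Z_def by (subst (asm) resolvent_mult_vec_eq_iff) auto
    have "(cmat C * minv Z * cmat B) *\<^sub>v w = cmat C *\<^sub>v x"
      using C B Z_inv(3) w
      by (simp add: x_def assoc_mult_mat_vec[of _ q nz _ p] assoc_mult_mat_vec[of _ nz nz _ p])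
    then show "sq_norm_vec ((cmat C * minv Z * cmat B) *\<^sub>v w) \<le> (sqrt (\<gamma> * (\<gamma> - \<delta>)))\<^sup>2 * sq_norm_vec w"
      using imaginary_axis_output_bound[OF \<gamma>(1) x w s state] \<gamma> by simp
  qed
qed

end

theorem bounded_real_lemma:
  assumes \<gamma>: "\<gamma> > 0" and lmi: "neg_def (bounded_real_lmi P N B C \<gamma>) (nz + p + q)"
  shows "hinf_norm (\<lambda>s. cmat C * minv (s \<cdot>\<^sub>m 1\<^sub>m nz - cmat N) * cmat B) < ereal \<gamma>"
proof -
  obtain \<delta>\<^sub>0 where "\<delta>\<^sub>0 > 0" and margin\<^sub>0: "\<forall>z \<in> carrier_vec (nz + p + q).
      Re (conjugate z \<bullet> (cmat (bounded_real_lmi P N B C \<gamma>) *\<^sub>v z)) \<le> - \<delta>\<^sub>0 * sq_norm_vec z"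
    using neg_def_uniformly_negative_complex[OF lmi] by blast
  \<comment> \<open>\<open>\<delta> \<le> \<gamma>\<close> keeps the radicand of the gain bound \<open>sqrt (\<gamma> (\<gamma> - \<delta>))\<close> nonnegative\<close>
  define \<delta> where "\<delta> = min \<delta>\<^sub>0 \<gamma>"
  have \<delta>: "\<delta> > 0" "\<delta> \<le> \<gamma>"
    using \<open>\<delta>\<^sub>0 > 0\<close> \<gamma> by (auto simp: \<delta>_def)
  have margin: "Re (conjugate z \<bullet> (cmat (bounded_real_lmi P N B C \<gamma>) *\<^sub>v z)) \<le> - \<delta> * sq_norm_vec z"
    if "z \<in> carrier_vec (nz + p + q)" for z
    using margin\<^sub>0 that sq_norm_vec_nonneg[of z] mult_right_mono[of \<delta> \<delta>\<^sub>0 "sq_norm_vec z"]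
    by (fastforce simp: \<delta>_def)
  have "sigma_max (cmat C * minv ((\<i> * complex_of_real \<mu>) \<cdot>\<^sub>m 1\<^sub>m nz - cmat N) * cmat B)
      \<le> sqrt (\<gamma> * (\<gamma> - \<delta>))" for \<mu>
  proof (rule imaginary_axis_gain[OF margin \<delta>(1) \<gamma> \<delta>(2)])
    show "cnj (\<i> * complex_of_real \<mu>) = - (\<i> * complex_of_real \<mu>)"
      by simp
  qed
  moreover have "\<gamma> * (\<gamma> - \<delta>) < \<gamma>\<^sup>2"
    using \<gamma> \<delta> by (simp add: power2_eq_square algebra_simps)
  then have "sqrt (\<gamma> * (\<gamma> - \<delta>)) < \<gamma>"
    using \<gamma> real_sqrt_less_mono by fastforce
  ultimately show ?thesis
    by (rule hinf_norm_less)
qed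

end

section \<open>The observer error system\<close>

lemma aug_carriers:
  assumes r: "r \<ge> 1" and A: "A \<in> carrier_mat n n" and S: "S \<in> carrier_mat n ng"
    and C: "C \<in> carrier_mat m n" and Dw: "Dw \<in> carrier_mat n nw"
  shows "aug_A n ng r A S \<in> carrier_mat (n + r * ng) (n + r * ng)"
    and "aug_D n ng nw r Dw \<in> carrier_mat (n + r * ng) (nw + ng)"
    and "aug_C n m ng r C \<in> carrier_mat m (n + r * ng)"
    and "aug_Cbar n ng r \<in> carrier_mat (n + ng) (n + r * ng)"
proof -
  define dn where "dn = (r - 1) * ng"
  have dims: "n + (ng + dn) = n + r * ng" "n + (dn + ng) = n + r * ng"
    using r unfolding dn_def by (cases r; simp)+
  have "aug_A n ng r A S \<in> carrier_mat (n + (dn + ng)) (n + (ng + dn))"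
    unfolding aug_A_def Let_def dn_def[symmetric] using A S
    by (intro block3_carrier[where ra = n and rb = dn and rc = ng and ca = n and cb = ng and cc = dn]) auto
  then show "aug_A n ng r A S \<in> carrier_mat (n + r * ng) (n + r * ng)"
    unfolding dims .
  have "aug_D n ng nw r Dw \<in> carrier_mat (n + (dn + ng)) (nw + ng)"
    unfolding aug_D_def Let_def dn_def[symmetric] using Dw by (intro carrier_append_rows hcat_carrier) auto
  then show "aug_D n ng nw r Dw \<in> carrier_mat (n + r * ng) (nw + ng)"
    unfolding dims .
  show "aug_C n m ng r C \<in> carrier_mat m (n + r * ng)"
    unfolding aug_C_def using C by (intro hcat_carrier) auto
  have "aug_Cbar n ng r \<in> carrier_mat (n + ng) (n + (ng + dn))"
    unfolding aug_Cbar_def Let_def dn_def[symmetric] by (intro carrier_append_rows hcat_carrier) auto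
  then show "aug_Cbar n ng r \<in> carrier_mat (n + ng) (n + r * ng)"
    unfolding dims .
qed

context
  fixes P R Q E K A C :: "real mat" and nz m :: nat
  assumes P: "P \<in> carrier_mat nz nz" and P_sym: "transpose_mat P = P"
    and E: "E \<in> carrier_mat nz m" and K: "K \<in> carrier_mat nz m"
    and A: "A \<in> carrier_mat nz nz" and C: "C \<in> carrier_mat m nz"
    and PE: "P * E = R" and PK: "P * K = Q"
begin

lemma observer_gain_mult: "P * (1\<^sub>m nz + E * C) = P + R * C"
proof -
  have "P * (1\<^sub>m nz + E * C) = P * 1\<^sub>m nz + P * (E * C)"
    using P E C by (intro mult_add_distrib_mat[of _ nz nz]) auto
  also have "P * (E * C) = (P * E) * C"
    using P E C by (simp add: assoc_mult_mat[of P nz nz E m C nz])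
  finally show ?thesis
    using P PE by simp
qed

lemma observer_error_matrix_mult:
  "P * ((1\<^sub>m nz + E * C) * A - K * C) = P * A + R * C * A - Q * C"
proof -
  have "P * ((1\<^sub>m nz + E * C) * A - K * C) = P * ((1\<^sub>m nz + E * C) * A) - P * (K * C)"
    using P E K A C by (intro mult_minus_distrib_mat[of _ nz nz]) auto
  also have "P * ((1\<^sub>m nz + E * C) * A) = (P * (1\<^sub>m nz + E * C)) * A"
    using P E A C by (simp add: assoc_mult_mat[of P nz nz _ nz A nz])
  also have "\<dots> = P * A + R * C * A"
    unfolding observer_gain_mult using P PE E A C by (intro add_mult_distrib_mat[of _ nz nz]) auto
  also have "P * (K * C) = Q * C"
    unfolding PK[symmetric] using P K C by simp
  finally show ?thesis .
qed

lemma observer_lyapunov_term: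
  defines "N \<equiv> (1\<^sub>m nz + E * C) * A - K * C"
  shows "transpose_mat A * P + transpose_mat A * transpose_mat C * transpose_mat R
      - transpose_mat C * transpose_mat Q + P * A + R * C * A - Q * C
    = transpose_mat N * P + P * N"
proof -
  have R: "R \<in> carrier_mat nz m" and Q: "Q \<in> carrier_mat nz m"
    using P E K PE PK by auto
  have N: "N \<in> carrier_mat nz nz"
    using E K A C unfolding N_def by auto
  have "transpose_mat N * P = transpose_mat (P * N)"
    using transpose_mult[OF P N] P_sym by simp
  also have "\<dots> = transpose_mat (P * A) + transpose_mat (R * C * A) - transpose_mat (Q * C)"
    unfolding N_def observer_error_matrix_mult using P A R C Q
    by (simp add: transpose_minus[of _ nz nz] transpose_add[of _ nz nz])
  also have "\<dots> = transpose_mat A * P + transpose_mat A * transpose_mat C * transpose_mat R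
      - transpose_mat C * transpose_mat Q"
    using P A R C Q P_sym
    by (simp add: transpose_mult[of P nz nz A nz] transpose_mult[of R nz m "C * A" nz]
        transpose_mult[of C m nz A nz] transpose_mult[of Q nz m C nz])
  finally show ?thesis
    unfolding N_def observer_error_matrix_mult using P A R C Q by (intro eq_matI) auto
qed

lemma observer_coupling_term:
  assumes D: "D \<in> carrier_mat nz p"
  shows "- ((P + R * C) * D) = P * (- ((1\<^sub>m nz + E * C) * D))"
proof -
  have "P * (- ((1\<^sub>m nz + E * C) * D)) = - (P * ((1\<^sub>m nz + E * C) * D))"
    using P E C D by (intro uminus_mult_right_mat) auto
  also have "P * ((1\<^sub>m nz + E * C) * D) = (P + R * C) * D"
    unfolding observer_gain_mult[symmetric] using P E C D by (simp add: assoc_mult_mat[of P nz nz _ nz D p])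
  finally show ?thesis ..
qed

lemma observer_lmi_eq_bounded_real_lmi:
  assumes D: "D \<in> carrier_mat nz p" and Cb: "Cb \<in> carrier_mat q nz"
  shows "block3 (transpose_mat A * P + transpose_mat A * transpose_mat C * transpose_mat R
        - transpose_mat C * transpose_mat Q + P * A + R * C * A - Q * C)
      (- ((P + R * C) * D)) (transpose_mat Cb)
      (transpose_mat (- ((P + R * C) * D))) (- (\<gamma> \<cdot>\<^sub>m 1\<^sub>m p)) (0\<^sub>m p q)
      Cb (0\<^sub>m q p) (- (\<gamma> \<cdot>\<^sub>m 1\<^sub>m q))
    = bounded_real_lmi P ((1\<^sub>m nz + E * C) * A - K * C) (- ((1\<^sub>m nz + E * C) * D)) Cb \<gamma>"
  using D Cb unfolding bounded_real_lmi_def observer_lyapunov_term observer_coupling_term[OF D] by simp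

end

lemma pos_def_mult_minv_cancel:
  assumes "pos_def P k" and X: "X \<in> carrier_mat k m"
  shows "P * (minv P * X) = X"
proof -
  have P: "P \<in> carrier_mat k k" and pos: "\<And>v. v \<in> carrier_vec k \<Longrightarrow> v \<noteq> 0\<^sub>v k \<Longrightarrow> v \<bullet> (P *\<^sub>v v) > 0"
    using assms(1) unfolding pos_def_def by auto
  have "v = 0\<^sub>v k" if "v \<in> carrier_vec k" "P *\<^sub>v v = 0\<^sub>v k" for v
    using pos[OF that(1)] that by force
  note P_inv = minv_of_injective[OF P this]
  then show ?thesis
    using P X by (simp add: assoc_mult_mat[symmetric, of P k k "minv P" k X m])
qed

lemma resolvent_transfer_uminus:
  assumes X: "X \<in> carrier_mat q nz" and N: "N \<in> carrier_mat nz nz"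
    and M: "M \<in> carrier_mat nz nz" and D: "D \<in> carrier_mat nz p"
  shows "cmat X * minv (s \<cdot>\<^sub>m 1\<^sub>m nz - cmat N) * cmat (- (M * D))
    = - (cmat X * minv (s \<cdot>\<^sub>m 1\<^sub>m nz - cmat N) * cmat M * cmat D)"
proof -
  have Z: "minv (s \<cdot>\<^sub>m 1\<^sub>m nz - cmat N) \<in> carrier_mat nz nz"
    using N by (intro minv_carrier minus_carrier_mat) simp
  have cmats: "cmat X \<in> carrier_mat q nz" "cmat M \<in> carrier_mat nz nz" "cmat D \<in> carrier_mat nz p"
    using X M D by simp_all
  show ?thesis
    using Z cmats
    by (simp add: cmat_uminus of_real_hom.mat_hom_mult[OF M D] assoc_mult_mat[OF Z cmats(2,3)]
        assoc_mult_mat[OF cmats(1) mult_carrier_mat[OF Z cmats(2)] cmats(3)]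
        assoc_mult_mat[OF cmats(1) Z mult_carrier_mat[OF cmats(2,3)]])
qed

theorem observer_error_hinf_bound:
  fixes P R Q Aa Ca Da Cb :: "real mat"
  assumes P: "pos_def P nz" and R: "R \<in> carrier_mat nz m" and Q: "Q \<in> carrier_mat nz m"
    and Aa: "Aa \<in> carrier_mat nz nz" and Da: "Da \<in> carrier_mat nz p"
    and Ca: "Ca \<in> carrier_mat m nz" and Cb: "Cb \<in> carrier_mat q nz" and \<gamma>: "\<gamma> > 0"
    and lmi: "neg_def (block3
        (transpose_mat Aa * P + transpose_mat Aa * transpose_mat Ca * transpose_mat R
          - transpose_mat Ca * transpose_mat Q + P * Aa + R * Ca * Aa - Q * Ca)
        (- ((P + R * Ca) * Da)) (transpose_mat Cb)
        (transpose_mat (- ((P + R * Ca) * Da))) (- (\<gamma> \<cdot>\<^sub>m 1\<^sub>m p)) (0\<^sub>m p q)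
        Cb (0\<^sub>m q p) (- (\<gamma> \<cdot>\<^sub>m 1\<^sub>m q))) (nz + p + q)"
  defines "M \<equiv> 1\<^sub>m nz + minv P * R * Ca" and "N \<equiv> (1\<^sub>m nz + minv P * R * Ca) * Aa - minv P * Q * Ca"
  shows "hinf_norm (\<lambda>s. - (cmat Cb * minv (s \<cdot>\<^sub>m 1\<^sub>m nz - cmat N) * cmat M * cmat Da)) < ereal \<gamma>"
proof -
  have Pc: "P \<in> carrier_mat nz nz" and P_sym: "transpose_mat P = P"
    using P unfolding pos_def_def by auto
  have E: "minv P * R \<in> carrier_mat nz m" and K: "minv P * Q \<in> carrier_mat nz m"
    using minv_carrier[OF Pc] R Q by simp_all
  have PE: "P * (minv P * R) = R" and PK: "P * (minv P * Q) = Q"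
    using pos_def_mult_minv_cancel[OF P] R Q by simp_all
  have M: "M \<in> carrier_mat nz nz" and N: "N \<in> carrier_mat nz nz"
    using E K Ca unfolding M_def N_def by (auto intro: minus_carrier_mat)
  have "neg_def (bounded_real_lmi P N (- (M * Da)) Cb \<gamma>) (nz + p + q)"
    using lmi unfolding M_def N_def observer_lmi_eq_bounded_real_lmi[OF Pc P_sym E K Aa Ca PE PK Da Cb] .
  moreover have "- (M * Da) \<in> carrier_mat nz p"
    using M Da by simp
  ultimately have "hinf_norm (\<lambda>s. cmat Cb * minv (s \<cdot>\<^sub>m 1\<^sub>m nz - cmat N) * cmat (- (M * Da))) < ereal \<gamma>"
    using bounded_real_lemma[OF Pc P_sym N _ Cb \<gamma>] by blast
  then show ?thesis
    unfolding resolvent_transfer_uminus[OF Cb N M Da] .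
qed

theorem proposition2:
  fixes n m ng nw r :: nat
    and A S C Dw P R Q :: "real mat"
    and lam :: real
  assumes r: "r \<ge> 1"
    and A: "A \<in> carrier_mat n n" and S: "S \<in> carrier_mat n ng"
    and C: "C \<in> carrier_mat m n" and Dw: "Dw \<in> carrier_mat n nw"
    and P: "pos_def P (n + r * ng)"
    and R: "R \<in> carrier_mat (n + r * ng) m" and Q: "Q \<in> carrier_mat (n + r * ng) m"
    and lam: "lam > 0"
    and LMI: "let nz = n + r * ng; Aa = aug_A n ng r A S; Da = aug_D n ng nw r Dw;
                  Ca = aug_C n m ng r C; Cb = aug_Cbar n ng r;
                  X = transpose_mat Aa * P + transpose_mat Aa * transpose_mat Ca * transpose_mat R
                      - transpose_mat Ca * transpose_mat Q + P * Aa + R * Ca * Aa - Q * Ca;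
                  B12 = - ((P + R * Ca) * Da)
              in neg_def (block3 X B12 (transpose_mat Cb)
                                 (transpose_mat B12) (- (lam \<cdot>\<^sub>m 1\<^sub>m (nw + ng))) (0\<^sub>m (nw + ng) (n + ng))
                                 Cb (0\<^sub>m (n + ng) (nw + ng)) (- (lam \<cdot>\<^sub>m 1\<^sub>m (n + ng))))
                         (nz + (nw + ng) + (n + ng))"
  shows "let nz = n + r * ng; Aa = aug_A n ng r A S; Da = aug_D n ng nw r Dw;
             Ca = aug_C n m ng r C; Cb = aug_Cbar n ng r;
             E = minv P * R; K = minv P * Q;
             M = 1\<^sub>m nz + E * Ca; N = M * Aa - K * Ca;
             cx = map_mat complex_of_real;
             T = (\<lambda>s. - (cx Cb * minv (s \<cdot>\<^sub>m 1\<^sub>m nz - cx N) * cx M * cx Da))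
         in hinf_norm T < ereal lam"
  using observer_error_hinf_bound[OF P R Q aug_carriers[OF r A S C Dw] lam LMI[unfolded Let_def]]
  unfolding Let_def .

end
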